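(* Let $P$ be the uniform distribution on $[0,1]$ and $\beta=\{\frac14,\frac12\}$. Let $n=4x+2$ for some $x\in\mathbb{N}$, let $\alpha_n$ be a conditional optimal set of $n$-points for $P$ with respect to $\beta$, and let $k=\mathrm{card}(\alpha_n\cap[0,\frac14])$, $\ell=\mathrm{card}(\alpha_n\cap[\frac14,\frac12])$, $m=\mathrm{card}(\alpha_n\cap[\frac12,1])$. Then $(k-1):(\ell-2):(m-1)=1:1:2$.
   Context: For a Borel probability measure $P$ on $\mathbb{R}$ and finite $\beta$ with $\mathrm{card}(\beta)=r$, for $n\ge r$, $V_n=\inf\{\int\min_{a\in\alpha\cup\beta}(x-a)^2dP(x):\mathrm{card}(\alpha)\le n-r\}$; a set $\alpha\cup\beta$ attaining the infimum, with each point of $\beta$ having a Voronoi region of positive $P$-measure, is a conditional optimal set of $n$-points with respect to $\beta$ (it contains $\beta$). *)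

theory Defs
  imports "HOL-Analysis.Analysis"
begin

definition qerr :: "real measure \<Rightarrow> real set \<Rightarrow> real" where
  "qerr P S = (\<integral>x. Min ((\<lambda>a. (x - a)^2) ` S) \<partial>P)"

definition condV :: "real measure \<Rightarrow> real set \<Rightarrow> nat \<Rightarrow> real" where
  "condV P \<beta> n = (INF \<alpha> \<in> {\<alpha>. finite \<alpha> \<and> card \<alpha> \<le> n - card \<beta>}. qerr P (\<alpha> \<union> \<beta>))"

definition voronoi :: "real set \<Rightarrow> real \<Rightarrow> real set" where
  "voronoi S b = {x. \<forall>a\<in>S. dist x b \<le> dist x a}"

definition cond_opt_set :: "real measure \<Rightarrow> real set \<Rightarrow> nat \<Rightarrow> real set \<Rightarrow> bool" where
  "cond_opt_set P \<beta> n S \<longleftrightarrow>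
     finite \<beta> \<and> card \<beta> \<le> n \<and>
     (\<exists>\<alpha>. finite \<alpha> \<and> card \<alpha> \<le> n - card \<beta> \<and> S = \<alpha> \<union> \<beta>) \<and>
     qerr P S = condV P \<beta> n \<and>
     (\<forall>b\<in>\<beta>. measure P (voronoi S b) > 0)"

end

(* A parabolic bump max 0 (R^2 - (y - t)^2) centred at each point t of a finite set T gives the
   pointwise bound R^2 - (sum of the bumps) <= dist(y, T)^2.  A bump carries mass at most 4R^3/3
   over an interval [u, v], and at most half of that if t lies outside (u, v); optimising R yields
   the lower bound (v - u)^3 / (12 N^2) for the error on [u, v], where N counts the points of T
   inside (u, v) fully and the others half.  Evenly spaced points attain it, since then the bumps
   tile [u, v].

   As 1/4 and 1/2 are quantizer points, the intervals [0, 1/4], [1/4, 1/2], [1/2, 1] decouple: with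
   a, b, c further points strictly inside them the error is at least
   (1/(a + 1/2)^2 + 1/(b + 1)^2 + 8/(c + 1/2)^2) / 768, strictly unless all points lie in (0, 1).
   A Lagrange multiplier argument for this separable convex function shows that under the budget
   a + b + c <= 4x its unique minimiser is (x, x, 2x), which evenly spaced points realise; hence
   an optimal set has exactly these counts. *)

theory Submission
  imports Defs
begin

lemma integral_uniform_measure_Icc:
  fixes f :: "real \<Rightarrow> real"
  assumes "a < b" and "continuous_on UNIV f"
  shows "(\<integral>x. f x \<partial>uniform_measure lborel {a..b}) = integral {a..b} f / (b - a)"
proof -
  have "uniform_measure lborel {a..b} = density lborel (\<lambda>x. ennreal (indicator {a..b} x / (b - a)))"
    using assms(1) divide_ennreal[of 1 "b - a"] unfolding uniform_measure_def
    by (intro density_cong) (auto split: split_indicator)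
  moreover have "f \<in> borel_measurable lborel"
    using assms(2) by (simp add: borel_measurable_continuous_onI)
  ultimately have "(\<integral>x. f x \<partial>uniform_measure lborel {a..b})
      = (\<integral>x. indicator {a..b} x *\<^sub>R f x \<partial>lborel) / (b - a)"
    using assms(1) by (simp add: integral_density)
  also have "\<dots> = integral {a..b} f / (b - a)"
    using set_borel_integral_eq_integral(2)[OF borel_integrable_atLeastAtMost'[of a b f]] assms(2)
    by (simp add: set_lebesgue_integral_def continuous_on_subset)
  finally show ?thesis .
qed

definition min_sq_dist :: "real set \<Rightarrow> real \<Rightarrow> real" where
  "min_sq_dist S y = Min ((\<lambda>a. (y - a)^2) ` S)"

lemma min_sq_dist_le: "finite S \<Longrightarrow> t \<in> S \<Longrightarrow> min_sq_dist S y \<le> (y - t)^2"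
  unfolding min_sq_dist_def by (rule Min_le) auto

lemma min_sq_dist_attained:
  assumes "finite S" "S \<noteq> {}"
  obtains t where "t \<in> S" "min_sq_dist S y = (y - t)^2"
proof -
  have "min_sq_dist S y \<in> (\<lambda>a. (y - a)^2) ` S"
    unfolding min_sq_dist_def using assms by (intro Min_in) auto
  then show ?thesis using that by blast
qed

lemma min_sq_dist_nonneg: "finite S \<Longrightarrow> S \<noteq> {} \<Longrightarrow> 0 \<le> min_sq_dist S y"
  by (metis min_sq_dist_attained zero_le_power2)

lemma min_sq_dist_antimono:
  "finite S \<Longrightarrow> T \<subseteq> S \<Longrightarrow> T \<noteq> {} \<Longrightarrow> min_sq_dist S y \<le> min_sq_dist T y"
  unfolding min_sq_dist_def by (intro Min_antimono image_mono) auto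

lemma min_sq_dist_subset_eq:
  assumes "finite S" "T \<subseteq> S" "T \<noteq> {}"
    and closer: "\<And>t. t \<in> S \<Longrightarrow> \<exists>s\<in>T. (y - s)^2 \<le> (y - t)^2"
  shows "min_sq_dist S y = min_sq_dist T y"
proof (rule antisym)
  obtain t where "t \<in> S" "min_sq_dist S y = (y - t)^2"
    using min_sq_dist_attained assms(1-3) by blast
  moreover from this obtain s where "s \<in> T" "(y - s)^2 \<le> (y - t)^2"
    using closer by blast
  ultimately show "min_sq_dist T y \<le> min_sq_dist S y"
    using min_sq_dist_le[of T s y] finite_subset[OF assms(2,1)] by linarith
qed (rule min_sq_dist_antimono[OF assms(1-3)])

lemma min_sq_dist_restrict_atMost:
  assumes "finite S" "w \<in> S" "y \<le> w"
  shows "min_sq_dist S y = min_sq_dist (S \<inter> {..w}) y"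
proof (rule min_sq_dist_subset_eq)
  fix t assume t: "t \<in> S"
  show "\<exists>s\<in>S \<inter> {..w}. (y - s)^2 \<le> (y - t)^2"
  proof (cases "t \<le> w")
    case False
    then have "(y - w)^2 \<le> (y - t)^2" using assms(3) by (simp add: abs_le_square_iff[symmetric])
    then show ?thesis using assms(2) by auto
  qed (use t in auto)
qed (use assms in auto)

lemma min_sq_dist_restrict_atLeast:
  assumes "finite S" "w \<in> S" "w \<le> y"
  shows "min_sq_dist S y = min_sq_dist (S \<inter> {w..}) y"
proof (rule min_sq_dist_subset_eq)
  fix t assume t: "t \<in> S"
  show "\<exists>s\<in>S \<inter> {w..}. (y - s)^2 \<le> (y - t)^2"
  proof (cases "w \<le> t")
    case False
    then have "(y - w)^2 \<le> (y - t)^2" using assms(3) by (simp add: abs_le_square_iff[symmetric])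
    then show ?thesis using assms(2) by auto
  qed (use t in auto)
qed (use assms in auto)

lemma continuous_on_min_sq_dist:
  assumes "finite S" "S \<noteq> {}"
  shows "continuous_on A (min_sq_dist S)"
  using assms unfolding min_sq_dist_def
proof (induction S rule: finite_ne_induct)
  case (insert a S)
  then show ?case by (simp add: continuous_on_min continuous_on_power continuous_on_diff)
qed (simp add: continuous_on_power continuous_on_diff)

lemma min_sq_dist_integrable:
  "finite S \<Longrightarrow> S \<noteq> {} \<Longrightarrow> min_sq_dist S integrable_on {u..v}"
  by (intro integrable_continuous_interval continuous_on_min_sq_dist)

lemma qerr_uniform_measure_Icc:
  assumes "a < b" "finite S" "S \<noteq> {}"
  shows "qerr (uniform_measure lborel {a..b}) S = integral {a..b} (min_sq_dist S) / (b - a)"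
  using integral_uniform_measure_Icc[OF assms(1) continuous_on_min_sq_dist[OF assms(2,3)]]
  unfolding qerr_def min_sq_dist_def .

lemma qerr_nonneg: "finite S \<Longrightarrow> S \<noteq> {} \<Longrightarrow> 0 \<le> qerr P S"
  unfolding qerr_def using min_sq_dist_nonneg[unfolded min_sq_dist_def]
  by (intro Bochner_Integration.integral_nonneg) auto

lemma condV_le_qerr:
  assumes "finite \<beta>" "\<beta> \<noteq> {}" "finite \<alpha>" "card \<alpha> \<le> n - card \<beta>"
  shows "condV P \<beta> n \<le> qerr P (\<alpha> \<union> \<beta>)"
  unfolding condV_def
  by (rule cINF_lower) (use assms in \<open>auto intro!: bdd_belowI[where m=0] qerr_nonneg\<close>)

section \<open>Parabolic bumps\<close>

definition bump :: "real \<Rightarrow> real \<Rightarrow> real \<Rightarrow> real" where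
  "bump R t y = max 0 (R^2 - (y - t)^2)"

(* (z + R)^2 (2R - z) / 3 is the primitive of R^2 - z^2 vanishing at z = -R; clamping
   z = y - t to [-R, R] turns it into a primitive of the bump on the whole line. *)
definition bump_primitive :: "real \<Rightarrow> real \<Rightarrow> real \<Rightarrow> real" where
  "bump_primitive R t y = (let z = max (-R) (min R (y - t)) in (z + R)^2 * (2 * R - z) / 3)"

lemma bump_nonneg: "0 \<le> bump R t y"
  by (simp add: bump_def)

lemma bump_eq_0: "R \<le> \<bar>y - t\<bar> \<Longrightarrow> 0 \<le> R \<Longrightarrow> bump R t y = 0"
  using abs_le_square_iff[of R "y - t"] by (simp add: bump_def)

lemma bump_eq_inside: "\<bar>y - t\<bar> \<le> R \<Longrightarrow> bump R t y = R^2 - (y - t)^2"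
  using abs_le_square_iff[of "y - t" R] by (simp add: bump_def)

lemma bump_primitive_has_derivative:
  assumes R: "R > 0" and y: "y \<noteq> t - R" "y \<noteq> t + R"
  shows "(bump_primitive R t has_real_derivative bump R t y) (at y)"
proof -
  consider "y < t - R" | "t - R < y" "y < t + R" | "t + R < y" using y by linarith
  then show ?thesis
  proof cases
    case 1
    have "((\<lambda>_. 0) has_real_derivative 0) (at y)" by simp
    then have "(bump_primitive R t has_real_derivative 0) (at y)"
      by (rule has_field_derivative_transform_within_open[where S = "{..<t - R}"])
         (use 1 R in \<open>auto simp: bump_primitive_def\<close>)
    then show ?thesis using 1 R bump_eq_0 by simp
  next
    case 2
    have "((\<lambda>y. (y - t + R)^2 * (2 * R - (y - t)) / 3) has_real_derivative R^2 - (y - t)^2) (at y)"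
      by (auto intro!: derivative_eq_intros simp: power2_eq_square field_simps)
    then have "(bump_primitive R t has_real_derivative R^2 - (y - t)^2) (at y)"
      by (rule has_field_derivative_transform_within_open[where S = "{t - R<..<t + R}"])
         (use 2 in \<open>auto simp: bump_primitive_def Let_def\<close>)
    then show ?thesis using 2 bump_eq_inside[of y t R] by simp
  next
    case 3
    have "((\<lambda>_. 4 * R^3 / 3) has_real_derivative 0) (at y)" by simp
    then have "(bump_primitive R t has_real_derivative 0) (at y)"
      by (rule has_field_derivative_transform_within_open[where S = "{t + R<..}"])
         (use 3 R in \<open>auto simp: bump_primitive_def power2_eq_square power3_eq_cube\<close>)
    then show ?thesis using 3 R bump_eq_0 by simp
  qed
qed

lemma has_integral_bump:
  assumes "R > 0" "u \<le> v"
  shows "(bump R t has_integral bump_primitive R t v - bump_primitive R t u) {u..v}"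
proof (rule fundamental_theorem_of_calculus_strong[where S = "{t - R, t + R}"])
  show "continuous_on {u..v} (bump_primitive R t)"
    unfolding bump_primitive_def Let_def by (intro continuous_intros) auto
qed (use assms bump_primitive_has_derivative[OF assms(1)] in
      \<open>auto simp: has_real_derivative_iff_has_vector_derivative[symmetric]\<close>)

lemma bump_integrable: "R > 0 \<Longrightarrow> bump R t integrable_on {u..v}"
  by (cases "u \<le> v") (auto dest: has_integral_bump[of R u v t] simp: integrable_on_def)

lemma integral_bump:
  "R > 0 \<Longrightarrow> u \<le> v \<Longrightarrow> integral {u..v} (bump R t) = bump_primitive R t v - bump_primitive R t u"
  using has_integral_bump by blast

lemma mono_bump_primitive: "R > 0 \<Longrightarrow> mono (bump_primitive R t)"
  by (rule monoI) (use has_integral_nonneg[OF has_integral_bump] bump_nonneg in fastforce)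

lemma bump_primitive_left: "y \<le> t - R \<Longrightarrow> 0 < R \<Longrightarrow> bump_primitive R t y = 0"
  and bump_primitive_centre: "0 < R \<Longrightarrow> bump_primitive R t t = 2 * R^3 / 3"
  and bump_primitive_right: "t + R \<le> y \<Longrightarrow> 0 < R \<Longrightarrow> bump_primitive R t y = 4 * R^3 / 3"
  by (auto simp: bump_primitive_def power2_eq_square power3_eq_cube)

lemma bump_primitive_bounds:
  assumes "R > 0"
  shows "0 \<le> bump_primitive R t y" "bump_primitive R t y \<le> 4 * R^3 / 3"
  using monoD[OF mono_bump_primitive[OF assms, of t], of "min y (t - R)" y]
    monoD[OF mono_bump_primitive[OF assms, of t], of y "max y (t + R)"]
    bump_primitive_left[of "min y (t - R)" t R] bump_primitive_right[of t R "max y (t + R)"] assms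
  by auto

section \<open>The error on one interval\<close>

(* A point outside (u, v) counts half: at most half of its bump lies over [u, v]. *)
definition interval_weight :: "real \<Rightarrow> real \<Rightarrow> real \<Rightarrow> real" where
  "interval_weight u v t = (if t \<in> {u<..<v} then 1 else 1 / 2)"

lemma sum_interval_weight:
  assumes "finite T"
  shows "(\<Sum>t\<in>T. interval_weight u v t) = real (card T) - real (card (T - {u<..<v})) / 2"
proof -
  have "(\<Sum>t\<in>T. interval_weight u v t) = (\<Sum>t\<in>T. 1 - (if t \<in> T - {u<..<v} then 1 / 2 else 0))"
    by (intro sum.cong) (auto simp: interval_weight_def)
  also have "\<dots> = real (card T) - (\<Sum>t\<in>T \<inter> (T - {u<..<v}). 1 / 2)"
    using sum.inter_restrict[OF assms, of "\<lambda>_. 1 / 2 :: real" "T - {u<..<v}"]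
    by (simp add: sum_subtractf)
  also have "\<dots> = real (card T) - real (card (T - {u<..<v})) / 2"
    by (simp add: Int_absorb1)
  finally show ?thesis .
qed

lemma sum_interval_weight_le:
  assumes "finite A"
  shows "(\<Sum>t\<in>A. interval_weight u v t) \<le> card A"
    and "\<not> A \<subseteq> {u<..<v} \<Longrightarrow> (\<Sum>t\<in>A. interval_weight u v t) < card A"
proof -
  show "(\<Sum>t\<in>A. interval_weight u v t) \<le> card A"
    by (simp add: sum_interval_weight[OF assms])
  assume "\<not> A \<subseteq> {u<..<v}"
  then have "0 < card (A - {u<..<v})"
    using assms by (auto simp: card_gt_0_iff)
  then show "(\<Sum>t\<in>A. interval_weight u v t) < card A"
    by (simp add: sum_interval_weight[OF assms])
qed

lemma integral_bump_le:
  assumes "R > 0" "u \<le> v"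
  shows "integral {u..v} (bump R t) \<le> 4 * R^3 / 3 * interval_weight u v t"
proof -
  have F: "0 \<le> bump_primitive R t y" "bump_primitive R t y \<le> 4 * R^3 / 3" for y
    using bump_primitive_bounds[OF assms(1)] by auto
  have "bump_primitive R t u \<ge> 2 * R^3 / 3" if "t \<le> u"
    using monoD[OF mono_bump_primitive[OF assms(1), of t] that] bump_primitive_centre[OF assms(1)] by simp
  moreover have "bump_primitive R t v \<le> 2 * R^3 / 3" if "v \<le> t"
    using monoD[OF mono_bump_primitive[OF assms(1), of t] that] bump_primitive_centre[OF assms(1)] by simp
  ultimately show ?thesis
    using F[of u] F[of v] unfolding integral_bump[OF assms] interval_weight_def
    by (cases "t \<le> u"; cases "v \<le> t") auto
qed

lemma integral_bump_eq:
  assumes "R > 0" "u < v" "t = u \<or> u \<le> t - R" "t = v \<or> t + R \<le> v"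
  shows "integral {u..v} (bump R t) = 4 * R^3 / 3 * interval_weight u v t"
  using assms bump_primitive_left[of u t R] bump_primitive_right[of t R v] bump_primitive_centre[of R t]
  unfolding integral_bump[OF assms(1) less_imp_le[OF assms(2)]] interval_weight_def
  by auto

lemma has_integral_sq_minus_bumps:
  assumes "R > 0" "finite T" "u \<le> v"
  shows "((\<lambda>y. R^2 - (\<Sum>t\<in>T. bump R t y)) has_integral
           R^2 * (v - u) - (\<Sum>t\<in>T. integral {u..v} (bump R t))) {u..v}"
proof -
  have "((\<lambda>y. \<Sum>t\<in>T. bump R t y) has_integral (\<Sum>t\<in>T. integral {u..v} (bump R t))) {u..v}"
    using assms by (intro has_integral_sum) (auto intro: bump_integrable)
  from has_integral_diff[OF has_integral_const_real[of "R^2" u v] this] show ?thesis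
    using assms(3) by (simp add: mult.commute)
qed

lemma sq_minus_bumps_le_min_sq_dist:
  assumes "finite T" "T \<noteq> {}"
  shows "R^2 - (\<Sum>t\<in>T. bump R t y) \<le> min_sq_dist T y"
proof -
  obtain s where s: "s \<in> T" "min_sq_dist T y = (y - s)^2"
    using min_sq_dist_attained[OF assms] by blast
  have "R^2 - (y - s)^2 \<le> bump R s y" by (simp add: bump_def)
  also have "\<dots> \<le> (\<Sum>t\<in>T. bump R t y)"
    using assms(1) s(1) by (intro member_le_sum bump_nonneg)
  finally show ?thesis using s(2) by linarith
qed

lemma min_sq_dist_le_sq_minus_bumps:
  assumes "finite G" "s \<in> G" "\<bar>y - s\<bar> \<le> R"
    and far: "\<And>t. t \<in> G \<Longrightarrow> t \<noteq> s \<Longrightarrow> R \<le> \<bar>y - t\<bar>"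
  shows "min_sq_dist G y \<le> R^2 - (\<Sum>t\<in>G. bump R t y)"
proof -
  have "(\<Sum>t\<in>G. bump R t y) = bump R s y + (\<Sum>t\<in>G - {s}. bump R t y)"
    by (rule sum.remove[OF assms(1,2)])
  also have "(\<Sum>t\<in>G - {s}. bump R t y) = 0"
    using assms(3) far by (intro sum.neutral) (auto intro!: bump_eq_0)
  finally have "(\<Sum>t\<in>G. bump R t y) = bump R s y" by simp
  then show ?thesis
    using bump_eq_inside[OF assms(3)] min_sq_dist_le[OF assms(1,2)] by simp
qed

lemma integral_min_sq_dist_ge:
  assumes "u < v" "finite T" "T \<noteq> {}"
  shows "(v - u)^3 / (12 * (\<Sum>t\<in>T. interval_weight u v t)^2) \<le> integral {u..v} (min_sq_dist T)"
proof -
  define N where "N = (\<Sum>t\<in>T. interval_weight u v t)"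
  have "N > 0"
    unfolding N_def using assms(2,3) by (intro sum_pos) (auto simp: interval_weight_def)
  define R where "R = (v - u) / (2 * N)"
  have R: "R > 0" using \<open>N > 0\<close> assms(1) by (simp add: R_def)
  have "R^2 * (v - u) - (\<Sum>t\<in>T. integral {u..v} (bump R t)) \<le> integral {u..v} (min_sq_dist T)"
    by (rule has_integral_le[OF has_integral_sq_minus_bumps[OF R assms(2) less_imp_le[OF assms(1)]]
          integrable_integral[OF min_sq_dist_integrable[OF assms(2,3)]]])
      (use assms sq_minus_bumps_le_min_sq_dist in auto)
  moreover have "(\<Sum>t\<in>T. integral {u..v} (bump R t)) \<le> 4 * R^3 / 3 * N"
    unfolding N_def sum_distrib_left using R assms(1)
    by (intro sum_mono integral_bump_le) auto
  moreover have "R^2 * (v - u) - 4 * R^3 / 3 * N = (v - u)^3 / (12 * N^2)"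
    using \<open>N > 0\<close> by (simp add: R_def field_simps power2_eq_square power3_eq_cube)
  ultimately show ?thesis unfolding N_def by linarith
qed

lemma grid_covering:
  assumes "R > 0" "q - R \<le> y" "y \<le> q + 2 * real m * R + R"
  obtains i where "i \<le> m" "\<bar>y - (q + 2 * real i * R)\<bar> \<le> R"
proof -
  define z where "z = (y - q + R) / (2 * R)"
  define k where "k = nat \<lfloor>z\<rfloor>"
  have "0 \<le> z" using assms by (simp add: z_def)
  then have "real k \<le> z" "z < real k + 1"
    unfolding k_def by (simp_all add: of_nat_floor)
  then have k: "2 * real k * R \<le> y - q + R" "y - q + R < 2 * real k * R + 2 * R"
    using assms(1) by (simp_all add: z_def field_simps)
  show thesis
  proof (cases "k \<le> m")
    case True
    then show thesis using k by (intro that[of k]) auto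
  next
    case False
    then have "2 * real m * R + 2 * R \<le> 2 * real k * R"
      using assms(1) by (simp add: mult_right_mono flip: distrib_right)
    then show thesis using k assms(3) by (intro that[of m]) auto
  qed
qed

definition grid_point :: "real \<Rightarrow> real \<Rightarrow> nat \<Rightarrow> real" where
  "grid_point q R i = q + 2 * real i * R"

definition grid :: "real \<Rightarrow> real \<Rightarrow> nat \<Rightarrow> real set" where
  "grid q R m = grid_point q R ` {..m}"

(* Points 2R apart whose end cells are either halved or centred at the end points of [u, v]:
   their bumps tile [u, v], so the estimate of integral_min_sq_dist_ge becomes an equality. *)
locale interval_grid =
  fixes u v q R :: real and m :: nat
  assumes uv: "u < v" and R: "0 < R"
    and left: "q = u \<or> q = u + R" and right: "q + 2 * real m * R = v \<or> q + 2 * real m * R + R = v"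
begin

lemma grid_point_gap: "i < j \<Longrightarrow> grid_point q R i + 2 * R \<le> grid_point q R j"
  using mult_right_mono[of "real i + 1" "real j" R] R by (simp add: grid_point_def algebra_simps)

lemma grid_point_0: "grid_point q R 0 = q"
  by (simp add: grid_point_def)

lemma grid_point_mono: "i \<le> j \<Longrightarrow> grid_point q R i \<le> grid_point q R j"
  using R by (simp add: grid_point_def mult_right_mono)

lemma grid_point_in_interval: "i \<le> m \<Longrightarrow> u \<le> grid_point q R i \<and> grid_point q R i \<le> v"
  using grid_point_mono[of 0 i] grid_point_mono[of i m] left right R
  unfolding grid_point_def by (elim disjE) linarith+

lemma finite_grid: "finite (grid q R m)" and grid_nonempty: "grid q R m \<noteq> {}"
  by (auto simp: grid_def)

lemma sum_interval_weight_grid: "(\<Sum>t\<in>grid q R m. interval_weight u v t) = (v - u) / (2 * R)"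
proof -
  have "inj (grid_point q R)"
    using R by (intro injI) (simp add: grid_point_def)
  then have card: "card (grid q R m) = m + 1"
    by (simp add: grid_def card_image inj_on_subset)
  have u_in: "u \<in> grid q R m \<longleftrightarrow> q = u"
  proof
    assume "u \<in> grid q R m"
    then obtain i where "u = grid_point q R i" by (auto simp: grid_def)
    then show "q = u" using grid_point_mono[of 0 i] grid_point_0 left R by auto
  next
    assume "q = u"
    then show "u \<in> grid q R m" unfolding grid_def using grid_point_0 by (intro image_eqI[of _ _ 0]) auto
  qed
  have v_in: "v \<in> grid q R m \<longleftrightarrow> grid_point q R m = v"
  proof
    assume "v \<in> grid q R m"
    then obtain i where "i \<le> m" "v = grid_point q R i" by (auto simp: grid_def)
    then show "grid_point q R m = v" using grid_point_mono[of i m] grid_point_in_interval[of m] by auto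
  qed (auto simp: grid_def)
  have "grid q R m \<subseteq> {u..v}"
    using grid_point_in_interval by (auto simp: grid_def)
  then have "grid q R m - {u<..<v} = grid q R m \<inter> {u, v}"
    by auto
  then have "card (grid q R m - {u<..<v}) = (if u \<in> grid q R m then 1 else 0) + (if v \<in> grid q R m then 1 else 0)"
    using uv by (simp add: Int_insert_right)
  then have "card (grid q R m - {u<..<v}) = (if q = u then 1 else 0) + (if grid_point q R m = v then 1 else 0)"
    unfolding u_in v_in .
  moreover have "v - u = 2 * R * (real m + 1 - ((if q = u then 1 else 0) + (if grid_point q R m = v then 1 else 0)) / 2)"
    using left right R by (auto simp: grid_point_def algebra_simps)
  ultimately show ?thesis
    using R by (simp add: sum_interval_weight[OF finite_grid] card)
qed

lemma integral_bump_grid: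
  assumes "t \<in> grid q R m"
  shows "integral {u..v} (bump R t) = 4 * R^3 / 3 * interval_weight u v t"
proof -
  obtain i where i: "i \<le> m" "t = grid_point q R i" using assms by (auto simp: grid_def)
  have "t = u \<or> u \<le> t - R"
    using i grid_point_gap[of 0 i] grid_point_0 left R by (cases "i = 0") auto
  moreover have "t = v \<or> t + R \<le> v"
    using i grid_point_gap[of i m] grid_point_in_interval[of m] right R
    by (cases "i = m") (auto simp: grid_point_def)
  ultimately show ?thesis by (rule integral_bump_eq[OF R uv])
qed

lemma min_sq_dist_grid_le:
  assumes "y \<in> {u..v}"
  shows "min_sq_dist (grid q R m) y \<le> R^2 - (\<Sum>t\<in>grid q R m. bump R t y)"
proof -
  have "q - R \<le> y" "y \<le> q + 2 * real m * R + R"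
    using assms left right R by auto
  then obtain i where i: "i \<le> m" "\<bar>y - grid_point q R i\<bar> \<le> R"
    unfolding grid_point_def by (rule grid_covering[OF R])
  have "R \<le> \<bar>y - t\<bar>" if t: "t \<in> grid q R m" "t \<noteq> grid_point q R i" for t
  proof -
    obtain j where "t = grid_point q R j" "j \<noteq> i" using t by (auto simp: grid_def)
    then have "2 * R \<le> \<bar>grid_point q R i - t\<bar>"
      using grid_point_gap[of i j] grid_point_gap[of j i] by (cases "i < j") auto
    then show ?thesis using i(2) by linarith
  qed
  then show ?thesis
    using i by (intro min_sq_dist_le_sq_minus_bumps finite_grid) (auto simp: grid_def)
qed

lemma integral_min_sq_dist_le:
  assumes "finite S" "grid q R m \<subseteq> S"
  shows "integral {u..v} (min_sq_dist S) \<le> R^2 * (v - u) / 3"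
proof -
  have "S \<noteq> {}" using assms(2) grid_nonempty by blast
  have "integral {u..v} (min_sq_dist S) \<le> R^2 * (v - u) - (\<Sum>t\<in>grid q R m. integral {u..v} (bump R t))"
  proof (rule has_integral_le[OF integrable_integral[OF min_sq_dist_integrable[OF assms(1) \<open>S \<noteq> {}\<close>]]
        has_integral_sq_minus_bumps[OF R finite_grid less_imp_le[OF uv]]])
    fix y assume "y \<in> {u..v}"
    then show "min_sq_dist S y \<le> R^2 - (\<Sum>t\<in>grid q R m. bump R t y)"
      using min_sq_dist_grid_le min_sq_dist_antimono[OF assms grid_nonempty, of y] by fastforce
  qed
  also have "(\<Sum>t\<in>grid q R m. integral {u..v} (bump R t)) = 4 * R^3 / 3 * ((v - u) / (2 * R))"
    by (simp add: integral_bump_grid sum_distrib_left flip: sum_interval_weight_grid)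
  also have "R^2 * (v - u) - 4 * R^3 / 3 * ((v - u) / (2 * R)) = R^2 * (v - u) / 3"
    using R by (simp add: field_simps power2_eq_square power3_eq_cube)
  finally show ?thesis .
qed

end

section \<open>The discrete allocation problem\<close>

lemma divide_less_divide_of_mult_less:
  fixes a b c d :: real
  shows "0 < b \<Longrightarrow> 0 < d \<Longrightarrow> a * d < c * b \<Longrightarrow> a / b < c / d"
  by (simp add: field_simps)

definition inv_sq_step :: "real \<Rightarrow> real" where
  "inv_sq_step y = 1 / y^2 - 1 / (y + 1)^2"

lemma inv_sq_step_eq: "0 < y \<Longrightarrow> inv_sq_step y = (2 * y + 1) / (y^2 * (y + 1)^2)"
  by (simp add: inv_sq_step_def field_simps; algebra)

lemma inv_sq_step_strict_antimono:
  assumes "0 < y" "y < z"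
  shows "inv_sq_step z < inv_sq_step y"
proof -
  have lin: "(2 * z + 1) * y < (2 * y + 1) * z"
    using assms by (simp add: algebra_simps)
  have "(y + 1)^2 < (z + 1)^2"
    using assms by (intro power_strict_mono) auto
  then have cub: "y * (y + 1)^2 < z * (z + 1)^2"
    using assms by (intro mult_strict_mono) auto
  have "((2 * z + 1) * y) * (y * (y + 1)^2) < ((2 * y + 1) * z) * (z * (z + 1)^2)"
    by (rule mult_strict_mono[OF lin cub]) (use assms in auto)
  then have "(2 * z + 1) * (y^2 * (y + 1)^2) < (2 * y + 1) * (z^2 * (z + 1)^2)"
    by (simp add: power2_eq_square mult_ac)
  then show ?thesis
    unfolding inv_sq_step_eq[OF assms(1)] inv_sq_step_eq[OF order.strict_trans[OF assms]]
    by (rule divide_less_divide_of_mult_less[rotated 2]) (use assms in auto)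
qed

lemma inv_sq_step_antimono: "0 < y \<Longrightarrow> y \<le> z \<Longrightarrow> inv_sq_step z \<le> inv_sq_step y"
  using inv_sq_step_strict_antimono[of y z] by (cases "y = z") auto

lemma eight_inv_sq_step_double_lt:
  assumes "0 < X"
  shows "8 * inv_sq_step (2 * X + 1 / 2) < inv_sq_step X"
proof -
  have "16 * X * (X + 1) < (4 * X + 1) * (4 * X + 3)"
    by (simp add: algebra_simps)
  then have "(16 * X * (X + 1))^2 < ((4 * X + 1) * (4 * X + 3))^2"
    using assms by (intro power_strict_mono) auto
  then have "256 * (X^2 * (X + 1)^2) < (4 * X + 1)^2 * (4 * X + 3)^2"
    by (simp add: power_mult_distrib)
  then have "(2 * X + 1) * (256 * (X^2 * (X + 1)^2)) < (2 * X + 1) * ((4 * X + 1)^2 * (4 * X + 3)^2)"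
    using assms by (intro mult_strict_left_mono) auto
  then have cross: "(2 * X + 1) * 256 * (X^2 * (X + 1)^2) < (2 * X + 1) * ((4 * X + 1)^2 * (4 * X + 3)^2)"
    by (simp only: mult.assoc)
  have "8 * inv_sq_step (2 * X + 1 / 2) = (2 * X + 1) * 256 / ((4 * X + 1)^2 * (4 * X + 3)^2)"
    using assms by (simp add: inv_sq_step_def field_simps; algebra)
  then show ?thesis
    unfolding inv_sq_step_eq[OF assms]
    by (simp only:) (rule divide_less_divide_of_mult_less[OF _ _ cross], use assms in auto)
qed

lemma inv_sq_step_lt_eight_double:
  assumes "1 \<le> X"
  shows "inv_sq_step X < 8 * inv_sq_step (2 * X - 1 / 2)"
proof -
  define s where "s = X - 1"
  have "0 \<le> s" "X = 1 + s" using assms by (auto simp: s_def)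
  then have "512 * X * (X^2 * (X + 1)^2) - (2 * X + 1) * ((4 * X - 1)^2 * (4 * X + 1)^2)
      = 1373 + 4862 * s + 6368 * s^2 + 3648 * s^3 + 768 * s^4"
    by algebra
  moreover have "0 < 1373 + 4862 * s + 6368 * s^2 + 3648 * s^3 + 768 * s^4"
    using \<open>0 \<le> s\<close> by (simp add: add_pos_nonneg)
  ultimately have "(2 * X + 1) * ((4 * X - 1)^2 * (4 * X + 1)^2) < 512 * X * (X^2 * (X + 1)^2)"
    by linarith
  moreover have "2 * X - 1 / 2 \<noteq> 0" "4 * X - 1 \<noteq> 0" using assms by auto
  then have "8 * inv_sq_step (2 * X - 1 / 2) = 512 * X / ((4 * X - 1)^2 * (4 * X + 1)^2)"
    using assms by (simp add: inv_sq_step_def field_simps; algebra)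
  ultimately show ?thesis
    unfolding inv_sq_step_eq[OF order.strict_trans2[OF zero_less_one assms]]
    using assms by (simp add: divide_less_divide_of_mult_less)
qed

lemma nat_min_of_increments:
  fixes h :: "nat \<Rightarrow> real"
  assumes up: "\<And>k. n0 \<le> k \<Longrightarrow> h k \<le> h (Suc k)" and down: "\<And>k. k < n0 \<Longrightarrow> h (Suc k) \<le> h k"
  shows "h n0 \<le> h n"
proof (cases "n0 \<le> n")
  case True
  then show ?thesis
  proof (induction n rule: dec_induct)
    case (step k)
    then show ?case using up[OF step.hyps(1)] by linarith
  qed simp
next
  case False
  then have "n \<le> n0" by simp
  then show ?thesis
  proof (induction n rule: inc_induct)
    case (step k)
    then show ?case using down[OF step.hyps(2)] by linarith
  qed simp
qed

lemma nat_strict_min_of_increments: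
  fixes h :: "nat \<Rightarrow> real"
  assumes up: "\<And>k. n0 \<le> k \<Longrightarrow> h k < h (Suc k)" and down: "\<And>k. k < n0 \<Longrightarrow> h (Suc k) < h k"
    and "n \<noteq> n0"
  shows "h n0 < h n"
proof -
  have min: "h n0 \<le> h m" for m
    by (rule nat_min_of_increments) (simp_all add: less_imp_le up down)
  show ?thesis
  proof (cases "n0 < n")
    case True
    then obtain k where "n = Suc k" "n0 \<le> k" by (cases n) auto
    then show ?thesis using min[of k] up[of k] by simp
  next
    case False
    then show ?thesis using min[of "Suc n"] down[of n] \<open>n \<noteq> n0\<close> by simp
  qed
qed

lemma inv_sq_plus_linear_increment:
  "C / (real (Suc k) + c)^2 + l * real (Suc k) - (C / (real k + c)^2 + l * real k)
     = l - C * inv_sq_step (real k + c)"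
proof -
  have Suc: "real (Suc k) + c = (real k + c) + 1" by simp
  show ?thesis unfolding inv_sq_step_def Suc by (simp add: ring_distribs)
qed

lemma inv_sq_plus_linear_min:
  fixes n0 n :: nat
  assumes "0 \<le> C" "0 < c" and up: "C * inv_sq_step (real n0 + c) \<le> l"
    and down: "0 < n0 \<Longrightarrow> l \<le> C * inv_sq_step (real n0 - 1 + c)"
  shows "C / (real n0 + c)^2 + l * real n0 \<le> C / (real n + c)^2 + l * real n"
proof (rule nat_min_of_increments[where h = "\<lambda>k. C / (real k + c)^2 + l * real k"])
  fix k assume "n0 \<le> k"
  then have "C * inv_sq_step (real k + c) \<le> C * inv_sq_step (real n0 + c)"
    using assms(1,2) by (intro mult_left_mono inv_sq_step_antimono) auto
  then show "C / (real k + c)^2 + l * real k \<le> C / (real (Suc k) + c)^2 + l * real (Suc k)"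
    using up inv_sq_plus_linear_increment[of C k c l] by linarith
next
  fix k assume "k < n0"
  then have "C * inv_sq_step (real n0 - 1 + c) \<le> C * inv_sq_step (real k + c)"
    using assms(1,2) by (intro mult_left_mono inv_sq_step_antimono) auto
  then show "C / (real (Suc k) + c)^2 + l * real (Suc k) \<le> C / (real k + c)^2 + l * real k"
    using down \<open>k < n0\<close> inv_sq_plus_linear_increment[of C k c l] by linarith
qed

lemma inv_sq_plus_linear_strict_min:
  fixes n0 n :: nat
  assumes "0 < C" "0 < c" and up: "C * inv_sq_step (real n0 + c) < l"
    and down: "0 < n0 \<Longrightarrow> l < C * inv_sq_step (real n0 - 1 + c)" and "n \<noteq> n0"
  shows "C / (real n0 + c)^2 + l * real n0 < C / (real n + c)^2 + l * real n"
proof (rule nat_strict_min_of_increments[where h = "\<lambda>k. C / (real k + c)^2 + l * real k"])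
  fix k assume "n0 \<le> k"
  then have "C * inv_sq_step (real k + c) \<le> C * inv_sq_step (real n0 + c)"
    using assms(1,2) by (intro mult_left_mono inv_sq_step_antimono) auto
  then show "C / (real k + c)^2 + l * real k < C / (real (Suc k) + c)^2 + l * real (Suc k)"
    using up inv_sq_plus_linear_increment[of C k c l] by linarith
next
  fix k assume "k < n0"
  then have "C * inv_sq_step (real n0 - 1 + c) \<le> C * inv_sq_step (real k + c)"
    using assms(1,2) by (intro mult_left_mono inv_sq_step_antimono) auto
  then show "C / (real (Suc k) + c)^2 + l * real (Suc k) < C / (real k + c)^2 + l * real k"
    using down \<open>k < n0\<close> inv_sq_plus_linear_increment[of C k c l] by linarith
qed (rule \<open>n \<noteq> n0\<close>)

(* The sum of (v - u)^3 / (12 N^2) over the intervals [0, 1/4], [1/4, 1/2], [1/2, 1],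
   which carry N = p, q, r effective points. *)
definition region_error :: "real \<Rightarrow> real \<Rightarrow> real \<Rightarrow> real" where
  "region_error p q r = (1 / p^2 + 1 / q^2 + 8 / r^2) / 768"

lemma region_error_antimono:
  assumes "0 < p" "p \<le> p'" "0 < r" "r \<le> r'"
  shows "region_error p' q r' \<le> region_error p q r"
    and "p < p' \<or> r < r' \<Longrightarrow> region_error p' q r' < region_error p q r"
proof -
  have p: "1 / p'^2 \<le> 1 / p^2" "p < p' \<Longrightarrow> 1 / p'^2 < 1 / p^2"
    using assms by (auto intro!: divide_left_mono divide_strict_left_mono power_mono power_strict_mono)
  have r: "8 / r'^2 \<le> 8 / r^2" "r < r' \<Longrightarrow> 8 / r'^2 < 8 / r^2"
    using assms by (auto intro!: divide_left_mono divide_strict_left_mono power_mono power_strict_mono)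
  show "region_error p' q r' \<le> region_error p q r"
    using p r by (simp add: region_error_def)
  show "p < p' \<or> r < r' \<Longrightarrow> region_error p' q r' < region_error p q r"
    using p r by (auto simp: region_error_def)
qed

lemma region_error_supporting_plane:
  fixes a b c x :: nat
  assumes "1 \<le> x"
  defines "l \<equiv> inv_sq_step (real x)"
  shows "768 * region_error (real x + 1/2) (real x + 1) (2 * real x + 1/2) + l * (4 * real x)
           \<le> 768 * region_error (real a + 1/2) (real b + 1) (real c + 1/2) + l * (real a + real b + real c)"
    and "a \<noteq> x \<or> c \<noteq> 2 * x \<Longrightarrow>
         768 * region_error (real x + 1/2) (real x + 1) (2 * real x + 1/2) + l * (4 * real x)
           < 768 * region_error (real a + 1/2) (real b + 1) (real c + 1/2) + l * (real a + real b + real c)"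
proof -
  have X: "1 \<le> real x" using assms(1) by simp
  have up1: "inv_sq_step (real x + 1/2) < l" and down1: "l < inv_sq_step (real x - 1 + 1/2)"
    using X inv_sq_step_strict_antimono[of "real x" "real x + 1/2"]
      inv_sq_step_strict_antimono[of "real x - 1/2" "real x"] by (simp_all add: l_def)
  have t1: "1 / (real x + 1/2)^2 + l * real x \<le> 1 / (real a + 1/2)^2 + l * real a"
    using up1 down1 by (intro inv_sq_plus_linear_min[of 1]) auto
  have s1: "a \<noteq> x \<Longrightarrow> 1 / (real x + 1/2)^2 + l * real x < 1 / (real a + 1/2)^2 + l * real a"
    using up1 down1 by (intro inv_sq_plus_linear_strict_min[of 1]) auto
  have t2: "1 / (real x + 1)^2 + l * real x \<le> 1 / (real b + 1)^2 + l * real b"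
    using X inv_sq_step_antimono[of "real x" "real x + 1"]
    by (intro inv_sq_plus_linear_min[of 1]) (auto simp: l_def)
  have up3: "8 * inv_sq_step (real (2 * x) + 1/2) < l"
    and down3: "l < 8 * inv_sq_step (real (2 * x) - 1 + 1/2)"
    using X eight_inv_sq_step_double_lt[of "real x"] inv_sq_step_lt_eight_double[of "real x"]
    by (simp_all add: l_def)
  have t3: "8 / (real (2 * x) + 1/2)^2 + l * real (2 * x) \<le> 8 / (real c + 1/2)^2 + l * real c"
    using up3 down3 by (intro inv_sq_plus_linear_min[of 8]) auto
  have s3: "c \<noteq> 2 * x \<Longrightarrow>
      8 / (real (2 * x) + 1/2)^2 + l * real (2 * x) < 8 / (real c + 1/2)^2 + l * real c"
    using up3 down3 by (intro inv_sq_plus_linear_strict_min[of 8]) auto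
  have "768 * region_error (real x + 1/2) (real x + 1) (2 * real x + 1/2)
      = 1 / (real x + 1/2)^2 + 1 / (real x + 1)^2 + 8 / (real (2 * x) + 1/2)^2"
    "768 * region_error (real a + 1/2) (real b + 1) (real c + 1/2)
      = 1 / (real a + 1/2)^2 + 1 / (real b + 1)^2 + 8 / (real c + 1/2)^2"
    "l * real (2 * x) = 2 * (l * real x)" "l * (4 * real x) = 4 * (l * real x)"
    "l * (real a + real b + real c) = l * real a + l * real b + l * real c"
    by (simp_all add: region_error_def algebra_simps)
  note sums = this
  show "768 * region_error (real x + 1/2) (real x + 1) (2 * real x + 1/2) + l * (4 * real x)
      \<le> 768 * region_error (real a + 1/2) (real b + 1) (real c + 1/2) + l * (real a + real b + real c)"
    using t1 t2 t3 sums by linarith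
  assume "a \<noteq> x \<or> c \<noteq> 2 * x"
  then show "768 * region_error (real x + 1/2) (real x + 1) (2 * real x + 1/2) + l * (4 * real x)
      < 768 * region_error (real a + 1/2) (real b + 1) (real c + 1/2) + l * (real a + real b + real c)"
    using t1 t2 t3 s1 s3 sums by (elim disjE) linarith+
qed

lemma region_error_nat_min:
  fixes a b c x :: nat
  assumes abc: "a + b + c \<le> 4 * x"
  shows "region_error (real x + 1/2) (real x + 1) (2 * real x + 1/2)
           \<le> region_error (real a + 1/2) (real b + 1) (real c + 1/2)"
    and "region_error (real a + 1/2) (real b + 1) (real c + 1/2)
           \<le> region_error (real x + 1/2) (real x + 1) (2 * real x + 1/2) \<Longrightarrow> a = x \<and> b = x \<and> c = 2 * x"
proof -
  define E where "E = region_error (real x + 1/2) (real x + 1) (2 * real x + 1/2)"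
  define F where "F = region_error (real a + 1/2) (real b + 1) (real c + 1/2)"
  \<comment> \<open>the Lagrange multiplier of the budget constraint at the optimum\<close>
  define l where "l = inv_sq_step (real x)"
  have budget: "l * (real a + real b + real c) \<le> l * (4 * real x)" if "0 < l"
    using abc that by (intro mult_left_mono) auto
  have l_pos: "0 < l" if "x \<noteq> 0"
    using that by (simp add: l_def inv_sq_step_eq)
  note plane = region_error_supporting_plane[where a = a and b = b and c = c and x = x, folded E_def F_def l_def]
  show "E \<le> F"
  proof (cases "x = 0")
    case False
    then have x: "1 \<le> x" and "0 < l" using l_pos by auto
    then show ?thesis using plane(1)[OF x] budget[OF \<open>0 < l\<close>] by linarith
  qed (use abc in \<open>simp add: E_def F_def\<close>)
  show "a = x \<and> b = x \<and> c = 2 * x" if "F \<le> E"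
  proof (cases "x = 0")
    case False
    then have x: "1 \<le> x" and "0 < l" using l_pos by auto
    have ac: "a = x \<and> c = 2 * x"
    proof (rule ccontr)
      assume "\<not> (a = x \<and> c = 2 * x)"
      then have "a \<noteq> x \<or> c \<noteq> 2 * x" by blast
      then show False using plane(2)[OF x] budget[OF \<open>0 < l\<close>] \<open>F \<le> E\<close> by linarith
    qed
    moreover have "b = x"
    proof (rule ccontr)
      assume "b \<noteq> x"
      then have "b < x" using abc ac by simp
      then have "l * (real a + real b + real c) < l * (4 * real x)" using ac \<open>0 < l\<close> by simp
      then show False using plane(1)[OF x] \<open>F \<le> E\<close> by linarith
    qed
    ultimately show ?thesis by blast
  qed (use abc in simp)
qed

section \<open>The three intervals cut out by 1/4 and 1/2\<close>

lemma integral_split3: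
  fixes f :: "real \<Rightarrow> real"
  assumes "f integrable_on {a..d}" "a \<le> b" "b \<le> c" "c \<le> d"
  shows "integral {a..d} f = integral {a..b} f + integral {b..c} f + integral {c..d} f"
proof -
  have "f integrable_on {a..c}"
    by (rule integrable_subinterval_real[OF assms(1)]) (use assms in auto)
  then have "integral {a..b} f + integral {b..c} f = integral {a..c} f"
    using assms by (intro Henstock_Kurzweil_Integration.integral_combine) auto
  moreover have "integral {a..c} f + integral {c..d} f = integral {a..d} f"
    using assms by (intro Henstock_Kurzweil_Integration.integral_combine) auto
  ultimately show ?thesis by linarith
qed

lemma integral_min_sq_dist_split3:
  "finite S \<Longrightarrow> S \<noteq> {} \<Longrightarrow> integral {0..1} (min_sq_dist S)
     = integral {0..1/4} (min_sq_dist S) + integral {1/4..1/2} (min_sq_dist S) + integral {1/2..1} (min_sq_dist S)"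
  by (intro integral_split3 min_sq_dist_integrable) auto

lemma exists_config_le_region_error:
  "\<exists>\<alpha>. finite \<alpha> \<and> card \<alpha> \<le> 4 * x \<and>
     integral {0..1} (min_sq_dist (\<alpha> \<union> {1/4, 1/2})) \<le> region_error (real x + 1/2) (real x + 1) (2 * real x + 1/2)"
proof -
  \<comment> \<open>half-spacings (v - u) / (2 N) for N = x + 1/2, x + 1, 2x + 1/2 effective points\<close>
  define R1 where "R1 = 1 / (4 * (2 * real x + 1))"
  define R2 where "R2 = 1 / (8 * (real x + 1))"
  define R3 where "R3 = 1 / (2 * (4 * real x + 1))"
  define \<alpha> where "\<alpha> = (\<lambda>i. R1 + 2 * real i * R1) ` {..<x} \<union> (\<lambda>i. 1/4 + 2 * real i * R2) ` {1..x}
    \<union> (\<lambda>i. 1/2 + 2 * real i * R3) ` {1..2 * x}"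
  define S where "S = \<alpha> \<union> {1/4, 1/2}"
  have "card \<alpha> \<le> x + x + 2 * x"
    unfolding \<alpha>_def by (intro card_Un_le[THEN order_trans] add_mono card_image_le[THEN order_trans]) auto
  have fin: "finite S" "S \<noteq> {}" by (simp_all add: S_def \<alpha>_def)
  have grid1: "interval_grid 0 (1/4) R1 R1 x"
    by unfold_locales (simp_all add: R1_def field_simps)
  have grid2: "interval_grid (1/4) (1/2) (1/4) R2 (Suc x)"
    by unfold_locales (simp_all add: R2_def field_simps)
  have "0 < R3" "(4 * real x + 1) * R3 = 1/2" by (simp_all add: R3_def)
  then have grid3: "interval_grid (1/2) 1 (1/2) R3 (2 * x)"
    by unfold_locales (simp_all add: algebra_simps)
  have "{..x} = insert x {..<x}" "{..Suc x} = insert 0 (insert (Suc x) {1..x})" "{..2 * x} = insert 0 {1..2 * x}"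
    by auto
  moreover have "R1 + 2 * real x * R1 = 1/4" "1/4 + 2 * real (Suc x) * R2 = 1/2"
    by (simp_all add: R1_def R2_def field_simps)
  moreover have "(\<lambda>i. R1 + 2 * real i * R1) ` {..<x} \<subseteq> S" "(\<lambda>i. 1/4 + 2 * real i * R2) ` {1..x} \<subseteq> S"
    "(\<lambda>i. 1/2 + 2 * real i * R3) ` {1..2 * x} \<subseteq> S" "1/4 \<in> S" "1/2 \<in> S"
    by (auto simp: S_def \<alpha>_def)
  ultimately have "grid R1 R1 x \<subseteq> S" "grid (1/4) R2 (Suc x) \<subseteq> S" "grid (1/2) R3 (2 * x) \<subseteq> S"
    unfolding grid_def grid_point_def by (simp_all only: image_insert insert_subset) simp_all
  then have "integral {0..1} (min_sq_dist S) \<le> R1^2 * (1/4 - 0) / 3 + R2^2 * (1/2 - 1/4) / 3 + R3^2 * (1 - 1/2) / 3"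
    using interval_grid.integral_min_sq_dist_le[OF grid1 fin(1)] interval_grid.integral_min_sq_dist_le[OF grid2 fin(1)]
      interval_grid.integral_min_sq_dist_le[OF grid3 fin(1)] integral_min_sq_dist_split3[OF fin]
    by linarith
  also have "\<dots> = region_error (real x + 1/2) (real x + 1) (2 * real x + 1/2)"
    unfolding region_error_def R1_def R2_def R3_def by (simp add: field_simps; algebra)
  finally show ?thesis
    using \<open>card \<alpha> \<le> x + x + 2 * x\<close> unfolding S_def by (intro exI[of _ \<alpha>]) (auto simp: \<alpha>_def)
qed

lemma region_error_le_integral:
  assumes S: "finite S" "1/4 \<in> S" "1/2 \<in> S"
  shows "region_error (\<Sum>t\<in>S \<inter> {..1/4}. interval_weight 0 (1/4) t)
           (\<Sum>t\<in>S \<inter> {1/4..1/2}. interval_weight (1/4) (1/2) t) (\<Sum>t\<in>S \<inter> {1/2..}. interval_weight (1/2) 1 t)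
         \<le> integral {0..1} (min_sq_dist S)"
proof -
  have ne: "S \<noteq> {}" using S by auto
  have "integral {0..1/4} (min_sq_dist S) = integral {0..1/4} (min_sq_dist (S \<inter> {..1/4}))"
    using S by (intro integral_cong min_sq_dist_restrict_atMost) auto
  moreover have "integral {1/4..1/2} (min_sq_dist S) = integral {1/4..1/2} (min_sq_dist (S \<inter> {1/4..1/2}))"
  proof (rule integral_cong)
    fix y :: real assume y: "y \<in> {1/4..1/2}"
    have "min_sq_dist S y = min_sq_dist (S \<inter> {..1/2}) y"
      using S y by (intro min_sq_dist_restrict_atMost) auto
    also have "\<dots> = min_sq_dist (S \<inter> {..1/2} \<inter> {1/4..}) y"
      using S y by (intro min_sq_dist_restrict_atLeast) auto
    also have "S \<inter> {..1/2} \<inter> {1/4..} = S \<inter> {1/4..1/2}" by auto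
    finally show "min_sq_dist S y = min_sq_dist (S \<inter> {1/4..1/2}) y" .
  qed
  moreover have "integral {1/2..1} (min_sq_dist S) = integral {1/2..1} (min_sq_dist (S \<inter> {1/2..}))"
    using S by (intro integral_cong min_sq_dist_restrict_atLeast) auto
  moreover have "(1/4 - 0)^3 / (12 * (\<Sum>t\<in>S \<inter> {..1/4}. interval_weight 0 (1/4) t)^2)
      \<le> integral {0..1/4} (min_sq_dist (S \<inter> {..1/4}))"
    using S by (intro integral_min_sq_dist_ge) auto
  moreover have "(1/2 - 1/4)^3 / (12 * (\<Sum>t\<in>S \<inter> {1/4..1/2}. interval_weight (1/4) (1/2) t)^2)
      \<le> integral {1/4..1/2} (min_sq_dist (S \<inter> {1/4..1/2}))"
    using S by (intro integral_min_sq_dist_ge) auto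
  moreover have "(1 - 1/2)^3 / (12 * (\<Sum>t\<in>S \<inter> {1/2..}. interval_weight (1/2) 1 t)^2)
      \<le> integral {1/2..1} (min_sq_dist (S \<inter> {1/2..}))"
    using S by (intro integral_min_sq_dist_ge) auto
  ultimately show ?thesis
    unfolding integral_min_sq_dist_split3[OF S(1) ne] region_error_def by (simp add: field_simps)
qed

lemma card_split_at_two_points:
  fixes a b :: real
  assumes "finite S" "a \<in> S" "b \<in> S" "a < b"
  shows "card S = card (S \<inter> {..<a}) + card (S \<inter> {a<..<b}) + card (S \<inter> {b<..}) + 2"
proof -
  have "S = insert a (insert b (S \<inter> {..<a} \<union> S \<inter> {a<..<b} \<union> S \<inter> {b<..}))"
    using assms by auto
  also have "card \<dots> = card (S \<inter> {..<a}) + card (S \<inter> {a<..<b}) + card (S \<inter> {b<..}) + 2"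
    using assms by (simp add: card_Un_disjoint disjoint_iff)
  finally show ?thesis .
qed

lemma region_error_counts_le_integral:
  fixes S :: "real set"
  defines "a \<equiv> card (S \<inter> {..<1/4})" and "b \<equiv> card (S \<inter> {1/4<..<1/2})" and "c \<equiv> card (S \<inter> {1/2<..})"
  assumes S: "finite S" "1/4 \<in> S" "1/2 \<in> S"
  shows "region_error (real a + 1/2) (real b + 1) (real c + 1/2) \<le> integral {0..1} (min_sq_dist S)"
    and "\<not> S \<subseteq> {0<..<1} \<Longrightarrow> region_error (real a + 1/2) (real b + 1) (real c + 1/2) < integral {0..1} (min_sq_dist S)"
proof -
  define A where "A = S \<inter> {..<1/4}"
  define C where "C = S \<inter> {1/2<..}"
  have fin: "finite A" "finite C" using S(1) by (simp_all add: A_def C_def)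
  define wA where "wA = (\<Sum>t\<in>A. interval_weight 0 (1/4) t)"
  define wC where "wC = (\<Sum>t\<in>C. interval_weight (1/2) 1 t)"
  have "wA \<le> a" "wC \<le> c"
    unfolding wA_def wC_def a_def c_def A_def C_def
    using sum_interval_weight_le(1)[OF fin(1)] sum_interval_weight_le(1)[OF fin(2)]
    by (simp_all only: A_def C_def)
  moreover have "0 \<le> wA" "0 \<le> wC"
    unfolding wA_def wC_def by (auto intro!: sum_nonneg simp: interval_weight_def)
  ultimately have w: "0 \<le> wA" "wA \<le> a" "0 \<le> wC" "wC \<le> c" by auto
  have "S \<inter> {..1/4} = insert (1/4) A" "S \<inter> {1/4..1/2} = insert (1/4) (insert (1/2) (S \<inter> {1/4<..<1/2}))"
    "S \<inter> {1/2..} = insert (1/2) C"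
    using S by (auto simp: A_def C_def)
  moreover have "(\<Sum>t\<in>S \<inter> {1/4<..<1/2}. interval_weight (1/4) (1/2) t) = b"
    by (simp add: b_def interval_weight_def)
  ultimately have low: "region_error (wA + 1/2) (real b + 1) (wC + 1/2) \<le> integral {0..1} (min_sq_dist S)"
    using region_error_le_integral[OF S] fin S(1)
    by (simp add: wA_def wC_def A_def C_def interval_weight_def add.commute)
  show "region_error (real a + 1/2) (real b + 1) (real c + 1/2) \<le> integral {0..1} (min_sq_dist S)"
    by (rule order_trans[OF region_error_antimono(1) low]) (use w in auto)
  assume "\<not> S \<subseteq> {0<..<1}"
  then obtain t where "t \<in> S" "t \<le> 0 \<or> 1 \<le> t"
    by (auto simp: subset_iff not_less)
  then have "\<not> A \<subseteq> {0<..<1/4} \<or> \<not> C \<subseteq> {1/2<..<1}"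
    by (auto simp: A_def C_def subset_iff)
  then have "wA < a \<or> wC < c"
    using sum_interval_weight_le(2)[OF fin(1), of 0 "1/4"] sum_interval_weight_le(2)[OF fin(2), of "1/2" 1]
    unfolding wA_def wC_def a_def c_def A_def C_def by blast
  then show "region_error (real a + 1/2) (real b + 1) (real c + 1/2) < integral {0..1} (min_sq_dist S)"
    using w by (intro order.strict_trans2[OF region_error_antimono(2) low]) auto
qed

lemma near_optimal_region_counts:
  assumes S: "finite S" "1/4 \<in> S" "1/2 \<in> S" and card: "card S \<le> 4 * x + 2"
    and opt: "integral {0..1} (min_sq_dist S) \<le> region_error (real x + 1/2) (real x + 1) (2 * real x + 1/2)"
  shows "card (S \<inter> {0..1/4}) = x + 1 \<and> card (S \<inter> {1/4..1/2}) = x + 2 \<and> card (S \<inter> {1/2..1}) = 2 * x + 1"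
proof -
  define A where "A = S \<inter> {..<1/4}"
  define B where "B = S \<inter> {1/4<..<1/2}"
  define C where "C = S \<inter> {1/2<..}"
  have "card A + card B + card C \<le> 4 * x"
    using card_split_at_two_points[OF S] card by (simp add: A_def B_def C_def)
  moreover have le: "region_error (real (card A) + 1/2) (real (card B) + 1) (real (card C) + 1/2)
      \<le> region_error (real x + 1/2) (real x + 1) (2 * real x + 1/2)"
    using region_error_counts_le_integral(1)[OF S] opt unfolding A_def B_def C_def by linarith
  ultimately have cards: "card A = x" "card B = x" "card C = 2 * x"
    using region_error_nat_min(2) by blast+
  have "S \<subseteq> {0<..<1}"
    using region_error_counts_le_integral(2)[OF S] opt cards unfolding A_def B_def C_def by force
  then have "S \<inter> {0..1/4} = insert (1/4) A" "S \<inter> {1/4..1/2} = insert (1/4) (insert (1/2) B)"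
    "S \<inter> {1/2..1} = insert (1/2) C"
    using S by (auto simp: A_def B_def C_def)
  then show ?thesis
    using S(1) cards by (simp add: A_def B_def C_def)
qed

theorem lemma3p6:
  fixes x :: nat and \<alpha>n :: "real set"
  assumes "cond_opt_set (uniform_measure lborel {0..1}) {1/4, 1/2} (4 * x + 2) \<alpha>n"
  shows "int (card (\<alpha>n \<inter> {0..1/4})) - 1 = int (card (\<alpha>n \<inter> {1/4..1/2})) - 2 \<and>
         int (card (\<alpha>n \<inter> {1/2..1})) - 1 = 2 * (int (card (\<alpha>n \<inter> {0..1/4})) - 1)"
proof -
  define P where "P = uniform_measure lborel {0..1::real}"
  define \<beta> where "\<beta> = {1/4, 1/2 :: real}"
  have "card \<beta> = 2" by (simp add: \<beta>_def)
  then obtain \<alpha> where \<alpha>: "finite \<alpha>" "card \<alpha> \<le> 4 * x" "\<alpha>n = \<alpha> \<union> \<beta>"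
    and opt: "qerr P \<alpha>n = condV P \<beta> (4 * x + 2)"
    using assms by (auto simp: cond_opt_set_def P_def \<beta>_def)
  have S: "finite \<alpha>n" "1/4 \<in> \<alpha>n" "1/2 \<in> \<alpha>n" and "\<alpha>n \<noteq> {}"
    using \<alpha> by (auto simp: \<beta>_def)
  have card: "card \<alpha>n \<le> 4 * x + 2"
    using card_Un_le[of \<alpha> \<beta>] \<alpha> \<open>card \<beta> = 2\<close> by simp
  obtain \<alpha>' where \<alpha>': "finite \<alpha>'" "card \<alpha>' \<le> 4 * x"
    "integral {0..1} (min_sq_dist (\<alpha>' \<union> \<beta>)) \<le> region_error (real x + 1/2) (real x + 1) (2 * real x + 1/2)"
    using exists_config_le_region_error[of x] unfolding \<beta>_def by blast
  have "integral {0..1} (min_sq_dist \<alpha>n) = qerr P \<alpha>n"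
    using qerr_uniform_measure_Icc[of 0 1 \<alpha>n] S \<open>\<alpha>n \<noteq> {}\<close> by (simp add: P_def)
  also have "\<dots> \<le> qerr P (\<alpha>' \<union> \<beta>)"
    unfolding opt using \<alpha>' \<open>card \<beta> = 2\<close> by (intro condV_le_qerr) (auto simp: \<beta>_def)
  also have "\<dots> = integral {0..1} (min_sq_dist (\<alpha>' \<union> \<beta>))"
    using qerr_uniform_measure_Icc[of 0 1 "\<alpha>' \<union> \<beta>"] \<alpha>'(1) by (simp add: P_def \<beta>_def)
  finally have "integral {0..1} (min_sq_dist \<alpha>n) \<le> region_error (real x + 1/2) (real x + 1) (2 * real x + 1/2)"
    using \<alpha>'(3) by linarith
  then show ?thesis
    using near_optimal_region_counts[OF S card] by simp
qed

end
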